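(* For every $p\in[0,1]$ and $k\ge1$, there is a deterministic algorithm for Locate on the uniform input distribution that runs in $k$ rounds, asks at most $k\lceil pn\rceil^{1/k}$ queries, and succeeds with probability at least $p$.
   Context: Locate problem in the rank query model: there is a vector $\vec{x}=(x_1,\ldots,x_n)$ whose ranks form a permutation of $\{1,\ldots,n\}$; an index $i$ is given and the goal is to output $\mathrm{rank}(x_i)$. Queries have the form "How is $\mathrm{rank}(x_j)$ compared to $m$?", with answer "$<$", "$=$" or "$>$". An algorithm runs in $k$ rounds if in each of $k$ rounds it submits a set of queries chosen depending only on answers of earlier rounds, then receives all answers. On the uniform input distribution the rank permutation is uniformly random, and the success probability is over this randomness. *)

theory Defs
  imports "HOL-Combinatorics.Permutations" Complex_Main
begin

text \<open>Rank query model. The rank vector is a permutation sigma of {1..n}: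
  sigma j = rank(x_j). A query (j, m) asks how rank(x_j) compares to m.\<close>

datatype answer = Less | Equal | Greater

definition cmp_ans :: "nat \<Rightarrow> nat \<Rightarrow> answer" where
  "cmp_ans a m = (if a < m then Less else if a = m then Equal else Greater)"

type_synonym query = "nat \<times> nat"

type_synonym round_answers = "query \<Rightarrow> answer option"

definition answer_round :: "(nat \<Rightarrow> nat) \<Rightarrow> query set \<Rightarrow> round_answers" where
  "answer_round sigma S = (\<lambda>q. if q \<in> S then Some (cmp_ans (sigma (fst q)) (snd q)) else None)"

record algorithm =
  queries :: "round_answers list \<Rightarrow> query set"
  result  :: "round_answers list \<Rightarrow> nat"

fun history :: "algorithm \<Rightarrow> (nat \<Rightarrow> nat) \<Rightarrow> nat \<Rightarrow> round_answers list" where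
  "history A sigma 0 = []"
| "history A sigma (Suc r) =
     history A sigma r @ [answer_round sigma (queries A (history A sigma r))]"

definition num_queries :: "algorithm \<Rightarrow> (nat \<Rightarrow> nat) \<Rightarrow> nat \<Rightarrow> nat" where
  "num_queries A sigma k = (\<Sum>r<k. card (queries A (history A sigma r)))"

definition finite_queries :: "algorithm \<Rightarrow> (nat \<Rightarrow> nat) \<Rightarrow> nat \<Rightarrow> bool" where
  "finite_queries A sigma k = (\<forall>r<k. finite (queries A (history A sigma r)))"

definition run :: "algorithm \<Rightarrow> (nat \<Rightarrow> nat) \<Rightarrow> nat \<Rightarrow> nat" where
  "run A sigma k = result A (history A sigma k)"

definition success_prob :: "algorithm \<Rightarrow> nat \<Rightarrow> nat \<Rightarrow> nat \<Rightarrow> real" where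
  "success_prob A n i k =
     real (card {sigma. sigma permutes {1..n} \<and> run A sigma k = sigma i})
       / real (card {sigma. sigma permutes {1..n}})"

end

theory Submission imports Defs begin

text \<open>The algorithm is a \<open>B\<close>-ary search with \<open>B = \<lfloor>m powr (1/k)\<rfloor> + 1\<close>, where \<open>m = \<lceil>p n\<rceil>\<close>.
  Knowing that \<open>rank(x\<^sub>i) - 1\<close> lies in an interval of length \<open>B \<cdot> s\<close>, one round of
  \<open>B - 1\<close> queries at the multiples of \<open>s\<close> narrows it to an interval of length \<open>s\<close>.
  Starting from \<open>[0, B\<^sup>k)\<close>, after \<open>k\<close> rounds the rank is known exactly whenever it is at
  most \<open>B\<^sup>k > m\<close>; under the uniform distribution \<open>rank(x\<^sub>i)\<close> is uniform on \<open>{1..n}\<close>,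
  so this happens with probability at least \<open>m / n \<ge> p\<close>. The algorithm asks
  \<open>k (B - 1) \<le> k m powr (1/k)\<close> queries.\<close>

lemma card_permutes_value_eq:
  assumes "v \<in> S" "w \<in> S"
  shows "card {\<sigma>. \<sigma> permutes S \<and> \<sigma> i = v} = card {\<sigma>. \<sigma> permutes S \<and> \<sigma> i = w}"
proof -
  let ?swap = "\<lambda>\<sigma>. transpose v w \<circ> \<sigma>"
  have involution: "?swap (?swap \<sigma>) = \<sigma>" for \<sigma>
    by (simp add: comp_assoc[symmetric])
  have "bij_betw ?swap {\<sigma>. \<sigma> permutes S \<and> \<sigma> i = v} {\<sigma>. \<sigma> permutes S \<and> \<sigma> i = w}"
    by (rule bij_betw_byWitness[where f' = ?swap])
      (use assms in \<open>auto simp: involution intro: permutes_compose permutes_swap_id\<close>)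
  then show ?thesis
    by (rule bij_betw_same_card)
qed

lemma card_permutes_value_in:
  assumes "finite S" "i \<in> S" "V \<subseteq> S"
  shows "card {\<sigma>. \<sigma> permutes S \<and> \<sigma> i \<in> V} * card S = card V * card {\<sigma>. \<sigma> permutes S}"
proof -
  define c where "c = card {\<sigma>. \<sigma> permutes S \<and> \<sigma> i = i}"
  have fiber_card: "card {\<sigma>. \<sigma> permutes S \<and> \<sigma> i \<in> W} = card W * c" if "W \<subseteq> S" for W
  proof -
    have "finite W"
      using that assms(1) finite_subset by blast
    have "finite {\<sigma>. \<sigma> permutes S \<and> \<sigma> i = v}" for v
      using finite_permutations[OF assms(1)] by (rule finite_subset[rotated]) auto
    then have "card {\<sigma>. \<sigma> permutes S \<and> \<sigma> i \<in> W} = (\<Sum>v\<in>W. card {\<sigma>. \<sigma> permutes S \<and> \<sigma> i = v})"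
      using \<open>finite W\<close> by (subst card_UN_disjoint[symmetric]) (auto intro: arg_cong[where f = card])
    also have "\<dots> = (\<Sum>v\<in>W. c)"
      unfolding c_def using that assms(2) by (intro sum.cong refl card_permutes_value_eq) auto
    finally show ?thesis
      by simp
  qed
  have "{\<sigma>. \<sigma> permutes S} = {\<sigma>. \<sigma> permutes S \<and> \<sigma> i \<in> S}"
    using assms(2) by (auto simp: permutes_in_image)
  then show ?thesis
    using fiber_card[OF assms(3)] fiber_card[OF order_refl] by simp
qed

lemma success_prob_ge_card:
  assumes "i \<in> {1..n}" "V \<subseteq> {1..n}"
    and correct: "\<And>\<sigma>. \<sigma> permutes {1..n} \<Longrightarrow> \<sigma> i \<in> V \<Longrightarrow> run A \<sigma> k = \<sigma> i"
  shows "real (card V) / real n \<le> success_prob A n i k"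
proof -
  let ?all = "{\<sigma>. \<sigma> permutes {1..n}}"
  let ?good = "{\<sigma>. \<sigma> permutes {1..n} \<and> \<sigma> i \<in> V}"
  let ?success = "{\<sigma>. \<sigma> permutes {1..n} \<and> run A \<sigma> k = \<sigma> i}"
  have "n > 0" "card ?all > 0"
    using assms(1) card_permutations[of "{1..n}" n] by auto
  have "finite ?success"
    using finite_permutations[of "{1..n::nat}"] by (rule finite_subset[rotated]) auto
  then have "card ?good \<le> card ?success"
    using correct by (intro card_mono) auto
  have "real (card V) / real n = real (card ?good) / real (card ?all)"
    using card_permutes_value_in[of "{1..n}" i V] assms(1,2) \<open>n > 0\<close> \<open>card ?all > 0\<close>
    by (simp add: field_simps flip: of_nat_mult)
  also have "\<dots> \<le> success_prob A n i k"
    unfolding success_prob_def using \<open>card ?good \<le> card ?success\<close>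
    by (intro divide_right_mono) auto
  finally show ?thesis .
qed

definition count_not_less :: "round_answers \<Rightarrow> nat" where
  "count_not_less a = card {q. a q = Some Equal \<or> a q = Some Greater}"

text \<open>Round \<open>r\<close> (counting from 0) queries the thresholds \<open>offset + j B^(k-1-r) + 1\<close> for
  \<open>0 < j < B\<close>; the offset is the lower bound for \<open>rank(x\<^sub>i) - 1\<close> known so far.\<close>

definition search_offset :: "nat \<Rightarrow> nat \<Rightarrow> round_answers list \<Rightarrow> nat" where
  "search_offset B k h = (\<Sum>r < length h. B ^ (k - 1 - r) * count_not_less (h ! r))"

definition search_queries :: "nat \<Rightarrow> nat \<Rightarrow> nat \<Rightarrow> round_answers list \<Rightarrow> query set" where
  "search_queries B k i h =
     (if length h < k
      then (\<lambda>j. (i, search_offset B k h + j * B ^ (k - 1 - length h) + 1)) ` {1..B - 1}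
      else {})"

definition multiway_search :: "nat \<Rightarrow> nat \<Rightarrow> nat \<Rightarrow> algorithm" where
  "multiway_search B k i =
     \<lparr>queries = search_queries B k i, result = (\<lambda>h. search_offset B k h + 1)\<rparr>"

lemma length_history [simp]: "length (history A \<sigma> r) = r"
  by (induction r) auto

lemma search_offset_snoc:
  "search_offset B k (h @ [a]) = search_offset B k h + B ^ (k - 1 - length h) * count_not_less a"
  unfolding search_offset_def by (simp add: nth_append)

lemma card_search_queries:
  "0 < B \<Longrightarrow> length h < k \<Longrightarrow> card (search_queries B k i h) = B - 1"
  unfolding search_queries_def by (simp add: card_image inj_on_def)

lemma count_not_less_search_round:
  assumes "0 < B" "length h < k"
  shows "count_not_less (answer_round \<sigma> (search_queries B k i h)) =
         card {j \<in> {1..B - 1}. search_offset B k h + j * B ^ (k - 1 - length h) < \<sigma> i}"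
proof -
  let ?threshold = "\<lambda>j. search_offset B k h + j * B ^ (k - 1 - length h)"
  let ?J = "{j \<in> {1..B - 1}. ?threshold j < \<sigma> i}"
  let ?query = "\<lambda>j. (i, ?threshold j + 1)"
  have "{q. answer_round \<sigma> (search_queries B k i h) q \<in> {Some Equal, Some Greater}} = ?query ` ?J"
    using assms by (auto simp: answer_round_def search_queries_def cmp_ans_def split: if_splits)
  moreover have "inj_on ?query ?J"
    using assms by (intro inj_onI) auto
  ultimately show ?thesis
    unfolding count_not_less_def by (simp add: card_image)
qed

lemma card_multiples_le:
  assumes "0 < s" "d < B * s"
  shows "card {j \<in> {1..B - 1}. j * s \<le> d} = d div s"
proof -
  have "d div s < B"
    using assms by (simp add: div_less_iff_less_mult)
  moreover have "j * s \<le> d \<longleftrightarrow> j \<le> d div s" for j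
    using assms(1) by (simp add: less_eq_div_iff_mult_less_eq)
  ultimately have "{j \<in> {1..B - 1}. j * s \<le> d} = {1..d div s}"
    by (simp add: set_eq_iff) linarith
  then show ?thesis
    by simp
qed

lemma multiway_search_interval:
  assumes "0 < B" "0 < \<sigma> i" "\<sigma> i \<le> B ^ k" "r \<le> k"
  shows "search_offset B k (history (multiway_search B k i) \<sigma> r) \<le> \<sigma> i - 1 \<and>
         \<sigma> i - 1 < search_offset B k (history (multiway_search B k i) \<sigma> r) + B ^ (k - r)"
  using assms(4)
proof (induction r)
  case 0
  then show ?case
    using assms(2,3) by (simp add: search_offset_def)
next
  case (Suc r)
  define h where "h = history (multiway_search B k i) \<sigma> r"
  define x where "x = \<sigma> i - 1"
  define l where "l = search_offset B k h"
  define s where "s = B ^ (k - Suc r)"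
  have "r < k" "length h = r"
    using Suc.prems unfolding h_def by auto
  have "0 < s"
    unfolding s_def using assms(1) by simp
  have "B ^ (k - r) = B * s"
    unfolding s_def using \<open>r < k\<close> by (simp flip: power_Suc add: Suc_diff_Suc)
  then have "l \<le> x" "x - l < B * s"
    using Suc unfolding l_def h_def x_def by auto
  have history_Suc: "history (multiway_search B k i) \<sigma> (Suc r) = h @ [answer_round \<sigma> (search_queries B k i h)]"
    unfolding h_def by (simp add: multiway_search_def)
  have "count_not_less (answer_round \<sigma> (search_queries B k i h)) = card {j \<in> {1..B - 1}. l + j * s < \<sigma> i}"
    using count_not_less_search_round[OF assms(1), of h k \<sigma> i] \<open>r < k\<close> \<open>length h = r\<close>
    unfolding l_def s_def by simp
  also have "\<dots> = card {j \<in> {1..B - 1}. j * s \<le> x - l}"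
    using \<open>l \<le> x\<close> assms(2) unfolding x_def by (intro arg_cong[where f = card]) auto
  also have "\<dots> = (x - l) div s"
    using card_multiples_le[OF \<open>0 < s\<close> \<open>x - l < B * s\<close>] .
  finally have "search_offset B k (history (multiway_search B k i) \<sigma> (Suc r)) = l + s * ((x - l) div s)"
    unfolding history_Suc search_offset_snoc \<open>length h = r\<close> l_def s_def by simp
  moreover have "s * ((x - l) div s) \<le> x - l" "x - l < s * ((x - l) div s) + s"
    using mult_div_mod_eq[of s "x - l"] mod_less_divisor[OF \<open>0 < s\<close>, of "x - l"]
    by linarith+
  ultimately show ?case
    using \<open>l \<le> x\<close> unfolding x_def s_def by linarith
qed

lemma run_multiway_search:
  assumes "0 < B" "0 < \<sigma> i" "\<sigma> i \<le> B ^ k"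
  shows "run (multiway_search B k i) \<sigma> k = \<sigma> i"
  using multiway_search_interval[of B \<sigma> i k k] assms
  by (simp add: run_def multiway_search_def) arith

lemma num_queries_multiway_search:
  "0 < B \<Longrightarrow> num_queries (multiway_search B k i) \<sigma> k = k * (B - 1)"
  unfolding num_queries_def by (simp add: multiway_search_def card_search_queries)

lemma finite_queries_multiway_search: "finite_queries (multiway_search B k i) \<sigma> k"
  unfolding finite_queries_def by (simp add: multiway_search_def search_queries_def)

lemma less_Suc_floor_root_power:
  fixes x :: real
  assumes "0 \<le> x" "0 < k"
  shows "x < real (Suc (nat \<lfloor>x powr (1 / real k)\<rfloor>)) ^ k"
proof (cases "x = 0")
  case False
  have "x = (x powr (1 / real k)) ^ k"
    using False assms by (simp add: powr_powr flip: powr_realpow)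
  also have "\<dots> < real (Suc (nat \<lfloor>x powr (1 / real k)\<rfloor>)) ^ k"
    using assms by (intro power_strict_mono) (linarith, simp_all)
  finally show ?thesis .
qed (use assms in simp)

theorem proposition5:
  fixes p :: real and k n i :: nat
  assumes "0 \<le> p" "p \<le> 1" "k \<ge> 1" "n \<ge> 1" "i \<in> {1..n}"
  shows "\<exists>A :: algorithm.
           (\<forall>sigma. sigma permutes {1..n} \<longrightarrow>
              finite_queries A sigma k \<and>
              real (num_queries A sigma k)
                \<le> real k * (real_of_int \<lceil>p * real n\<rceil>) powr (1 / real k))
         \<and> success_prob A n i k \<ge> p"
proof -
  define m where "m = real_of_int \<lceil>p * real n\<rceil>"
  define B where "B = Suc (nat \<lfloor>m powr (1 / real k)\<rfloor>)"
  define A where "A = multiway_search B k i"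
  have "0 \<le> p * real n" "p * real n \<le> real n"
    using assms mult_left_le_one_le[of "real n" p] by auto
  moreover have "\<lceil>p * real n\<rceil> \<le> int n"
    using \<open>p * real n \<le> real n\<close> by (simp add: ceiling_le_iff)
  ultimately have "0 \<le> m" "p * real n \<le> m" "m \<le> real n"
    unfolding m_def by (simp_all add: le_of_int_ceiling)
  have "m < real (B ^ k)"
    using less_Suc_floor_root_power[OF \<open>0 \<le> m\<close>] assms(3) unfolding B_def by simp
  have "real (k * (B - 1)) \<le> real k * m powr (1 / real k)"
    unfolding B_def using \<open>0 \<le> m\<close> by (simp add: mult_left_mono)
  then have queries: "finite_queries A \<sigma> k \<and> real (num_queries A \<sigma> k) \<le> real k * m powr (1 / real k)" for \<sigma>
    unfolding A_def B_def by (simp add: finite_queries_multiway_search num_queries_multiway_search)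
  have "p * real n \<le> real (min n (B ^ k))"
    using \<open>p * real n \<le> m\<close> \<open>m \<le> real n\<close> \<open>m < real (B ^ k)\<close> by (auto simp: min_def)
  then have "p \<le> real (card {1..min n (B ^ k)}) / real n"
    using assms(4) by (simp add: pos_le_divide_eq)
  also have "\<dots> \<le> success_prob A n i k"
    unfolding A_def using assms(5)
    by (intro success_prob_ge_card run_multiway_search) (auto simp: B_def)
  finally show ?thesis
    using queries unfolding m_def by blast
qed

end
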